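(* Let $m\ge 1$, $n\ge 0$, let $y_1,\dots,y_m$ be distinct integers each less than $-1$, let $x_1,\dots,x_n$ be distinct integers each greater than $1$, and let $D=\{1,y_1,\dots,y_m,x_1,\dots,x_n\}$. Then $diam(D)=diam(D\cup\{0\})$, and $diam(D)=4$ if $m=1$, $diam(D)=5$ if $m=2$, and $diam(D)=6$ if $m>2$.
   Context: A signed tree is a pair $(T,s)$ where $T$ is a finite tree and $s:E(T)\to\{+,-\}$. The signed degree $sdeg(v)$ of a vertex is the number of incident positive edges minus the number of incident negative edges. $(T,s)$ realizes (satisfies) a set $D$ of integers if $D=\{sdeg(v):v\in V(T)\}$. For a set $D$ containing $1$ or $-1$, $diam(D)=\min\{diam(T): \text{some signed tree }(T,s)\text{ realizes }D\}$, where $diam(T)$ is the diameter of the tree $T$. *)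

theory Defs
  imports Main
begin

text \<open>Finite simple graphs with vertices in nat: a vertex set V and an edge set E
  of 2-element subsets of V.  Every finite tree is isomorphic to one on nat vertices.\<close>

definition graph :: "nat set \<Rightarrow> nat set set \<Rightarrow> bool" where
  "graph V E \<longleftrightarrow> finite V \<and> (\<forall>e\<in>E. e \<subseteq> V \<and> card e = 2)"

definition walk :: "nat set set \<Rightarrow> nat list \<Rightarrow> bool" where
  "walk E p \<longleftrightarrow> p \<noteq> [] \<and> (\<forall>i. Suc i < length p \<longrightarrow> {p ! i, p ! Suc i} \<in> E)"

definition connected_graph :: "nat set \<Rightarrow> nat set set \<Rightarrow> bool" where
  "connected_graph V E \<longleftrightarrow>
     (\<forall>u\<in>V. \<forall>v\<in>V. \<exists>p. walk E p \<and> set p \<subseteq> V \<and> hd p = u \<and> last p = v)"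

definition is_cycle :: "nat set set \<Rightarrow> nat list \<Rightarrow> bool" where
  "is_cycle E p \<longleftrightarrow> length p \<ge> 3 \<and> distinct p \<and> walk E p \<and> {last p, hd p} \<in> E"

definition acyclic_graph :: "nat set set \<Rightarrow> bool" where
  "acyclic_graph E \<longleftrightarrow> \<not> (\<exists>p. is_cycle E p)"

definition tree :: "nat set \<Rightarrow> nat set set \<Rightarrow> bool" where
  "tree V E \<longleftrightarrow> V \<noteq> {} \<and> graph V E \<and> connected_graph V E \<and> acyclic_graph E"

definition gdist :: "nat set set \<Rightarrow> nat \<Rightarrow> nat \<Rightarrow> nat" where
  "gdist E u v = (LEAST k. \<exists>p. walk E p \<and> hd p = u \<and> last p = v \<and> length p = Suc k)"

definition tree_diam :: "nat set \<Rightarrow> nat set set \<Rightarrow> nat" where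
  "tree_diam V E = Max {gdist E u v | u v. u \<in> V \<and> v \<in> V}"

text \<open>Signs: s e = True means positive edge, False means negative edge.\<close>
definition sdeg :: "nat set set \<Rightarrow> (nat set \<Rightarrow> bool) \<Rightarrow> nat \<Rightarrow> int" where
  "sdeg E s v = int (card {e\<in>E. v \<in> e \<and> s e}) - int (card {e\<in>E. v \<in> e \<and> \<not> s e})"

definition realizes :: "nat set \<Rightarrow> nat set set \<Rightarrow> (nat set \<Rightarrow> bool) \<Rightarrow> int set \<Rightarrow> bool" where
  "realizes V E s D \<longleftrightarrow> D = sdeg E s ` V"

definition diamD :: "int set \<Rightarrow> nat" where
  "diamD D = (LEAST d. \<exists>V E s. tree V E \<and> realizes V E s D \<and> tree_diam V E = d)"

end

theory Submission
  imports Defs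
begin

(* A vertex of signed degree y < -1 has two negative edges, and since -1 is not a signed degree,
   neither of their other ends is a leaf: the vertex has two arms of length two. A path between
   two such vertices therefore extends by two edges at each end. With one, two, or at least three
   degrees below -1 this gives diameter at least 4, 5, 6 respectively; for three such
   vertices some two are non-adjacent, since a tree has no triangle.

   Conversely, the degrees are realized by hanging gadgets from a centre: a positive edge to a
   vertex with x - 1 leaves for each x in X, a negative edge to a vertex with one leaf for the
   degree 0, and negative edges to vertices with two leaves to lower the centre's degree to y.
   This has radius 2. For two negative degrees y1, y2 the two ends of a positive edge serve as
   centres (diameter 5); for more, each y hangs at depth one as a vertex with 1 - y negative
   pendant gadgets and the centre gets degree 1 (radius 3). The optional degree 0 never changes
   the bound. *)

section \<open>Walks and paths in acyclic graphs\<close>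

lemma walk_Nil [simp]: "\<not> walk E []"
  by (simp add: walk_def)

lemma walk_singleton [simp]: "walk E [x]"
  by (simp add: walk_def)

lemma walk_Cons_Cons [simp]: "walk E (x # y # zs) \<longleftrightarrow> {x, y} \<in> E \<and> walk E (y # zs)"
  unfolding walk_def by (auto simp: less_Suc_eq_0_disj)

lemma walk_mono: "walk E p \<Longrightarrow> E \<subseteq> E' \<Longrightarrow> walk E' p"
  unfolding walk_def by blast

lemma walk_append_Cons: "walk E (xs @ y # ys) \<longleftrightarrow> walk E (xs @ [y]) \<and> walk E (y # ys)"
  by (induction xs rule: induct_list012) auto

lemma walk_snoc: "xs \<noteq> [] \<Longrightarrow> walk E (xs @ [y]) \<longleftrightarrow> walk E xs \<and> {last xs, y} \<in> E"
  by (induction xs rule: induct_list012) auto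

lemma walk_ConsD: "walk E (x # xs) \<Longrightarrow> xs \<noteq> [] \<Longrightarrow> walk E xs"
  by (cases xs) auto

lemma walk_prefix: "walk E (xs @ ys) \<Longrightarrow> xs \<noteq> [] \<Longrightarrow> walk E xs"
  by (induction xs rule: induct_list012) auto

lemma walk_suffix: "walk E (xs @ ys) \<Longrightarrow> ys \<noteq> [] \<Longrightarrow> walk E ys"
  by (induction xs) (auto dest: walk_ConsD)

lemma walk_take: "walk E p \<Longrightarrow> 0 < n \<Longrightarrow> walk E (take n p)"
  using walk_prefix[of E "take n p" "drop n p"] by (cases p) auto

lemma walk_rev: "walk E p \<Longrightarrow> walk E (rev p)"
proof (induction p rule: induct_list012)
  case (3 x y zs)
  then have "walk E (rev (y # zs) @ [x])"
    by (subst walk_snoc) (auto simp: insert_commute)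
  then show ?case by simp
qed auto

lemma walk_append_tl:
  assumes "walk E p" "walk E (y # q)" "last p = y"
  shows "walk E (p @ q)"
proof -
  obtain p' where "p = p' @ [y]" using assms(1,3) by (cases p rule: rev_cases) auto
  then show ?thesis using assms walk_append_Cons[of E p' y q] by simp
qed

lemma walk_avoiding: "walk (insert e E) p \<Longrightarrow> u \<in> e \<Longrightarrow> u \<notin> set p \<Longrightarrow> walk E p"
  by (induction p rule: induct_list012) auto

lemma walk_length_ge_3: "walk E P \<Longrightarrow> hd P \<noteq> last P \<Longrightarrow> {hd P, last P} \<notin> E \<Longrightarrow> 3 \<le> length P"
  by (induction P rule: induct_list012) (auto split: if_splits simp: Suc_le_eq)

lemma walk_shorten_to_path:
  assumes "walk E q"
  obtains q' where "walk E q'" "distinct q'" "hd q' = hd q" "last q' = last q" "length q' \<le> length q"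
  using assms
proof (induction "length q" arbitrary: q rule: less_induct)
  case less
  show ?case
  proof (cases "distinct q")
    case True
    then show ?thesis using less.prems by blast
  next
    case False
    then obtain xs y ys zs where q: "q = xs @ [y] @ ys @ [y] @ zs"
      using not_distinct_decomp by blast
    have "walk E (xs @ [y])" "walk E (y # zs)"
      using less.prems(2) walk_append_Cons[of E xs y "ys @ y # zs"]
        walk_append_Cons[of E "xs @ y # ys" y zs] q by auto
    then have "walk E (xs @ y # zs)" using walk_append_Cons by blast
    moreover have "hd (xs @ y # zs) = hd q" "last (xs @ y # zs) = last q"
      using q by (cases xs; cases zs; simp)+
    moreover have "length (xs @ y # zs) < length q" using q by simp
    ultimately show ?thesis using less.hyps less.prems(1) by (metis order.strict_implies_order order.trans)
  qed
qed

lemma acyclic_graphD: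
  "acyclic_graph E \<Longrightarrow> distinct c \<Longrightarrow> walk E c \<Longrightarrow> 3 \<le> length c \<Longrightarrow> {last c, hd c} \<notin> E"
  unfolding acyclic_graph_def is_cycle_def by blast

lemma acyclic_paths_same_second_vertex:
  assumes acyc: "acyclic_graph E"
    and dp: "distinct (u # p)" and dq: "distinct (u # q)"
    and wp: "walk E (u # p)" and wq: "walk E (u # q)"
    and ne: "p \<noteq> []" "q \<noteq> []" and ends: "last p = last q"
  shows "hd p = hd q"
proof (rule ccontr)
  assume hd_ne: "hd p \<noteq> hd q"
  have "\<exists>x\<in>set p. x \<in> set q" using ends ne by (metis last_in_set)
  then obtain r w r' where p: "p = r @ w # r'" and w: "w \<in> set q" and r: "\<forall>x\<in>set r. x \<notin> set q"
    using split_list_first_prop[of p "\<lambda>x. x \<in> set q"] by blast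
  obtain t t' where q: "q = t @ w # t'" using split_list[OF w] by blast
  \<comment> \<open>\<open>u # r @ [w]\<close> and \<open>u # t @ [w]\<close> are internally disjoint paths: together they close a cycle\<close>
  define c where "c = u # r @ w # rev t"
  have "walk E ((u # r) @ [w])" using wp p walk_append_Cons[of E "u # r" w r'] by simp
  moreover have "walk E (w # rev t)"
    using walk_rev[OF walk_suffix[of E "[u]" "t @ [w]"]] wq q walk_append_Cons[of E "u # t" w t']
    by simp
  ultimately have "walk E c" unfolding c_def using walk_append_Cons[of E "u # r" w "rev t"] by simp
  moreover have "distinct c" unfolding c_def using dp dq p q r by auto
  moreover have "3 \<le> length c" unfolding c_def using hd_ne p q by (cases r; cases t) auto
  moreover have "{last c, hd c} \<in> E"
  proof -
    have "last c = hd q" unfolding c_def using q by (cases t) auto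
    then show ?thesis using wq ne by (cases q) (auto simp: insert_commute c_def)
  qed
  ultimately show False using acyclic_graphD[OF acyc] by blast
qed

lemma acyclic_path_unique:
  assumes "acyclic_graph E"
  shows "distinct p \<Longrightarrow> distinct q \<Longrightarrow> walk E p \<Longrightarrow> walk E q \<Longrightarrow> hd p = hd q \<Longrightarrow> last p = last q
    \<Longrightarrow> p = q"
proof (induction p arbitrary: q)
  case Nil
  then show ?case by simp
next
  case (Cons u p)
  obtain q' where q: "q = u # q'" using Cons.prems by (cases q) auto
  consider "p = []" | "q' = []" | "p \<noteq> []" "q' \<noteq> []" by blast
  then show ?case
  proof cases
    case 1
    then show ?thesis using Cons.prems q by (cases q' rule: rev_cases) auto
  next
    case 2
    then show ?thesis using Cons.prems q by (cases p rule: rev_cases) auto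
  next
    case 3
    then have "hd p = hd q'"
      using acyclic_paths_same_second_vertex[OF assms] Cons.prems q by simp
    moreover have "walk E p" "walk E q'" using Cons.prems q 3 walk_ConsD by blast+
    ultimately show ?thesis using Cons.IH[of q'] Cons.prems q 3 by simp
  qed
qed

lemma acyclic_path_neighbour_of_hd:
  assumes acyc: "acyclic_graph E" and Q: "distinct Q" "walk E Q"
    and x: "x \<in> set Q" "x \<noteq> hd Q" "{hd Q, x} \<in> E"
  shows "x = Q ! 1"
proof -
  obtain k where k: "k < length Q" "Q ! k = x" using x(1) by (auto simp: in_set_conv_nth)
  have "k \<noteq> 0" using k x(2) by (cases Q) (auto simp: nth_Cons' split: if_splits)
  moreover have "\<not> 2 \<le> k"
  proof
    assume "2 \<le> k"
    let ?c = "take (Suc k) Q"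
    have "distinct ?c" "walk E ?c" "3 \<le> length ?c" using Q k \<open>2 \<le> k\<close> walk_take by auto
    moreover have "last ?c = x" "hd ?c = hd Q" using k by (simp add: take_Suc_conv_app_nth, cases Q, auto)
    then have "{last ?c, hd ?c} \<in> E" using x(3) by (simp add: insert_commute)
    ultimately show False using acyclic_graphD[OF acyc] by blast
  qed
  ultimately show ?thesis using k by (metis One_nat_def less_2_cases not_le)
qed

lemma gdist_le_walk: "walk E p \<Longrightarrow> gdist E (hd p) (last p) \<le> length p - 1"
  unfolding gdist_def by (rule Least_le) (cases p; auto)

lemma gdist_path:
  assumes acyc: "acyclic_graph E" and p: "distinct p" "walk E p"
  shows "gdist E (hd p) (last p) = length p - 1"
  unfolding gdist_def
proof (rule Least_equality)
  show "\<exists>q. walk E q \<and> hd q = hd p \<and> last q = last p \<and> length q = Suc (length p - 1)"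
    using p by (cases p) auto
next
  fix k assume "\<exists>q. walk E q \<and> hd q = hd p \<and> last q = last p \<and> length q = Suc k"
  then obtain q where q: "walk E q" "hd q = hd p" "last q = last p" "length q = Suc k" by blast
  obtain q' where "walk E q'" "distinct q'" "hd q' = hd q" "last q' = last q" "length q' \<le> length q"
    using walk_shorten_to_path[OF q(1)] .
  with acyclic_path_unique[OF acyc p(1) _ p(2)] q show "length p - 1 \<le> k" by force
qed

section \<open>Trees, diameters and signed degrees\<close>

lemma tree_finite:
  assumes "tree V E"
  shows "finite V" "finite E" "\<forall>e\<in>E. e \<subseteq> V"
proof -
  show "finite V" "\<forall>e\<in>E. e \<subseteq> V" using assms by (auto simp: tree_def graph_def)
  then show "finite E" using finite_subset[of E "Pow V"] by blast
qed

lemma tree_edgeD: "tree V E \<Longrightarrow> {a, b} \<in> E \<Longrightarrow> a \<in> V \<and> b \<in> V \<and> a \<noteq> b"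
  unfolding tree_def graph_def by (cases "a = b") auto

lemma tree_edge_at: "tree V E \<Longrightarrow> e \<in> E \<Longrightarrow> v \<in> e \<Longrightarrow> \<exists>a. a \<noteq> v \<and> e = {v, a}"
proof -
  assume "tree V E" "e \<in> E" "v \<in> e"
  then have "card e = 2" by (auto simp: tree_def graph_def)
  then obtain x y where "e = {x, y}" "x \<noteq> y" by (auto simp: card_2_iff)
  then show ?thesis using \<open>v \<in> e\<close> by auto
qed

lemma tree_path:
  assumes "tree V E" "u \<in> V" "v \<in> V"
  obtains p where "distinct p" "walk E p" "hd p = u" "last p = v"
proof -
  obtain q where q: "walk E q" "hd q = u" "last q = v"
    using assms unfolding tree_def connected_graph_def by blast
  obtain q' where "walk E q'" "distinct q'" "hd q' = hd q" "last q' = last q" "length q' \<le> length q"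
    using q(1) by (rule walk_shorten_to_path)
  then show ?thesis using q by (intro that) simp_all
qed

lemma connected_graphI_root:
  assumes "r \<in> V" "\<And>u. u \<in> V \<Longrightarrow> \<exists>p. walk E p \<and> set p \<subseteq> V \<and> hd p = r \<and> last p = u"
  shows "connected_graph V E"
  unfolding connected_graph_def
proof (intro ballI)
  fix u v assume "u \<in> V" "v \<in> V"
  then obtain p q where p: "walk E p" "set p \<subseteq> V" "hd p = r" "last p = u"
    and q: "walk E q" "set q \<subseteq> V" "hd q = r" "last q = v"
    using assms(2) by meson
  have q': "q = r # tl q" using q(1,3) by (cases q) auto
  have "walk E (rev p @ tl q)" using walk_append_tl[OF walk_rev[OF p(1)]] q(1) q' p(1,3)
    by (metis last_rev walk_Nil)
  moreover have "set (rev p @ tl q) \<subseteq> V" using p(2) q(2) q' by (auto intro: list.set_sel(2))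
  moreover have "hd (rev p @ tl q) = u" using p(1,4) by (cases p rule: rev_cases) auto
  moreover have "last (rev p @ tl q) = v" using p(1,3) q(4) q' by (cases "tl q") (auto simp: last_rev)
  ultimately show "\<exists>w. walk E w \<and> set w \<subseteq> V \<and> hd w = u \<and> last w = v" by blast
qed

lemma is_cycle_rotate1: "is_cycle E c \<Longrightarrow> is_cycle E (rotate1 c)"
proof (cases c)
  case (Cons x xs)
  assume cyc: "is_cycle E c"
  then obtain y ys where xs: "xs = y # ys" using Cons by (cases xs) (auto simp: is_cycle_def)
  have "walk E (xs @ [x])" "{x, y} \<in> E"
    using cyc Cons xs by (auto simp: is_cycle_def walk_snoc insert_commute simp del: append_Cons)
  then show ?thesis using cyc Cons xs by (auto simp: is_cycle_def)
qed (simp add: is_cycle_def)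

lemma is_cycle_rotate: "is_cycle E c \<Longrightarrow> is_cycle E (rotate n c)"
  by (induction n) (simp_all add: is_cycle_rotate1)

lemma tree_singleton: "tree {c} {}"
  unfolding tree_def graph_def acyclic_graph_def is_cycle_def
  by (auto intro!: connected_graphI_root[of c] exI[of _ "[c]"])

lemma connected_graph_add_leaf:
  assumes con: "connected_graph V E" and v: "v \<in> V"
  shows "connected_graph (insert w V) (insert {v, w} E)"
proof (rule connected_graphI_root)
  show "v \<in> insert w V" using v by simp
next
  fix u assume "u \<in> insert w V"
  then consider "u = w" | "u \<in> V" by blast
  then show "\<exists>p. walk (insert {v, w} E) p \<and> set p \<subseteq> insert w V \<and> hd p = v \<and> last p = u"
  proof cases
    case 1
    then show ?thesis using v by (intro exI[of _ "[v, w]"]) auto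
  next
    case 2
    then obtain p where "walk E p" "set p \<subseteq> V" "hd p = v" "last p = u"
      using con v unfolding connected_graph_def by blast
    then show ?thesis using walk_mono[of E p "insert {v, w} E"] by blast
  qed
qed

lemma acyclic_graph_add_leaf:
  assumes acyc: "acyclic_graph E" and w: "\<forall>e\<in>E. w \<notin> e"
  shows "acyclic_graph (insert {v, w} E)"
  unfolding acyclic_graph_def
proof
  let ?E = "insert {v, w} E"
  have w_nbr: "a = v" if "{w, a} \<in> ?E" for a
    using that w by (auto simp: doubleton_eq_iff)
  assume "\<exists>c. is_cycle ?E c"
  then obtain c where cyc: "is_cycle ?E c" by blast
  show False
  proof (cases "w \<in> set c")
    case False
    have "c \<noteq> []" using cyc by (auto simp: is_cycle_def)
    then have "{last c, hd c} \<noteq> {v, w}" using False by (auto simp: doubleton_eq_iff)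
    then have "is_cycle E c"
      using cyc walk_avoiding[of "{v, w}" E c w] False by (simp add: is_cycle_def)
    then show False using acyc unfolding acyclic_graph_def by blast
  next
    case True
    \<comment> \<open>rotate the cycle to start at the leaf \<open>w\<close>, whose only neighbour is \<open>v\<close>\<close>
    then obtain xs ys where "c = xs @ w # ys" by (meson split_list)
    then have "is_cycle ?E (w # ys @ xs)"
      using is_cycle_rotate[OF cyc, of "length xs"] by (simp add: rotate_append)
    then obtain zs where zs: "is_cycle ?E (w # zs)" by blast
    then have dist: "distinct zs" "2 \<le> length zs" by (auto simp: is_cycle_def)
    from zs dist have "{w, hd zs} \<in> ?E" "{w, last zs} \<in> ?E"
      by (cases zs; auto simp: is_cycle_def insert_commute)+
    then have "hd zs = last zs" using w_nbr by metis
    then show False using dist by (cases zs) (auto split: if_splits)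
  qed
qed

lemma tree_add_leaf:
  assumes t: "tree V E" and v: "v \<in> V" and w: "w \<notin> V"
  shows "tree (insert w V) (insert {v, w} E)"
proof -
  have "v \<noteq> w" using v w by blast
  then have "graph (insert w V) (insert {v, w} E)"
    using t v unfolding tree_def graph_def by auto
  moreover have "connected_graph (insert w V) (insert {v, w} E)"
    using t connected_graph_add_leaf[OF _ v] by (simp add: tree_def)
  moreover have "\<forall>e\<in>E. w \<notin> e" using tree_finite(3)[OF t] w by blast
  then have "acyclic_graph (insert {v, w} E)"
    using t acyclic_graph_add_leaf by (simp add: tree_def)
  ultimately show ?thesis unfolding tree_def by simp
qed

lemma finite_gdists: "finite V \<Longrightarrow> finite {gdist E u v |u v. u \<in> V \<and> v \<in> V}"
  using finite_image_set2[of "\<lambda>u. u \<in> V" "\<lambda>v. v \<in> V" "gdist E"] by simp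

lemma gdist_le_tree_diam: "tree V E \<Longrightarrow> u \<in> V \<Longrightarrow> v \<in> V \<Longrightarrow> gdist E u v \<le> tree_diam V E"
  unfolding tree_diam_def by (rule Max_ge) (use finite_gdists tree_finite in blast)+

lemma tree_diam_le:
  "tree V E \<Longrightarrow> (\<And>u v. u \<in> V \<Longrightarrow> v \<in> V \<Longrightarrow> gdist E u v \<le> d) \<Longrightarrow> tree_diam V E \<le> d"
proof -
  assume t: "tree V E" and le: "\<And>u v. u \<in> V \<Longrightarrow> v \<in> V \<Longrightarrow> gdist E u v \<le> d"
  obtain u where "u \<in> V" using t by (auto simp: tree_def)
  then have "{gdist E u v |u v. u \<in> V \<and> v \<in> V} \<noteq> {}" by blast
  then show ?thesis
    unfolding tree_diam_def using le by (subst Max_le_iff) (auto simp: finite_gdists tree_finite[OF t])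
qed

definition reachable_within :: "nat set set \<Rightarrow> nat \<Rightarrow> nat \<Rightarrow> nat \<Rightarrow> bool" where
  "reachable_within E r u v \<longleftrightarrow> (\<exists>p. walk E p \<and> hd p = u \<and> last p = v \<and> length p \<le> Suc r)"

lemma reachable_within_refl: "reachable_within E r u u"
  unfolding reachable_within_def by (intro exI[of _ "[u]"]) simp

lemma reachable_within_edge: "{u, v} \<in> E \<Longrightarrow> reachable_within E 1 u v"
  unfolding reachable_within_def by (intro exI[of _ "[u, v]"]) simp

lemma reachable_within_mono:
  "reachable_within E r u v \<Longrightarrow> E \<subseteq> E' \<Longrightarrow> r \<le> r' \<Longrightarrow> reachable_within E' r' u v"
  unfolding reachable_within_def using walk_mono le_trans Suc_le_mono by blast

lemma reachable_within_sym: "reachable_within E r u v \<Longrightarrow> reachable_within E r v u"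
proof -
  assume "reachable_within E r u v"
  then obtain p where p: "walk E p" "hd p = u" "last p = v" "length p \<le> Suc r"
    unfolding reachable_within_def by blast
  then have "p \<noteq> []" by auto
  then show ?thesis
    unfolding reachable_within_def using p walk_rev
    by (intro exI[of _ "rev p"]) (simp add: hd_rev last_rev)
qed

lemma reachable_within_trans:
  assumes "reachable_within E r u v" "reachable_within E k v w"
  shows "reachable_within E (r + k) u w"
proof -
  obtain p where p: "walk E p" "hd p = u" "last p = v" "length p \<le> Suc r"
    using assms(1) unfolding reachable_within_def by blast
  obtain q where q: "walk E q" "hd q = v" "last q = w" "length q \<le> Suc k"
    using assms(2) unfolding reachable_within_def by blast
  have q': "q = v # tl q" using q(1,2) by (cases q) auto
  have "walk E (p @ tl q)" using walk_append_tl[OF p(1) _ p(3)] q(1) q' by simp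
  moreover have "hd (p @ tl q) = u" using p by (cases p) auto
  moreover have "last (p @ tl q) = w" using p(1,3) q(3) q' by (cases "tl q") auto
  moreover have "length (p @ tl q) \<le> Suc (r + k)" using p(4) q(4) q' by simp
  ultimately show ?thesis unfolding reachable_within_def by blast
qed

lemma gdist_le_if_reachable_within: "reachable_within E r u v \<Longrightarrow> gdist E u v \<le> r"
  unfolding reachable_within_def using gdist_le_walk by fastforce

lemma tree_diam_le_center:
  assumes "tree V E" "\<forall>u\<in>V. reachable_within E r c u"
  shows "tree_diam V E \<le> 2 * r"
proof (rule tree_diam_le[OF assms(1)])
  fix u v assume "u \<in> V" "v \<in> V"
  then have "reachable_within E r u c" "reachable_within E r c v"
    using assms(2) reachable_within_sym by blast+
  then have "gdist E u v \<le> r + r" by (intro gdist_le_if_reachable_within reachable_within_trans)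
  then show "gdist E u v \<le> 2 * r" by simp
qed

lemma tree_diam_le_bicenter:
  assumes "tree V E" "{c, d} \<in> E" "\<forall>u\<in>V. reachable_within E r c u \<or> reachable_within E r d u"
  shows "tree_diam V E \<le> 2 * r + 1"
proof (rule tree_diam_le[OF assms(1)])
  have cd: "reachable_within E 1 c d" using assms(2) by (rule reachable_within_edge)
  have centres: "reachable_within E 1 a b" if "a \<in> {c, d}" "b \<in> {c, d}" for a b
    using that cd reachable_within_sym[OF cd] reachable_within_refl by auto
  fix u v assume "u \<in> V" "v \<in> V"
  then obtain a b where "a \<in> {c, d}" "b \<in> {c, d}" "reachable_within E r a u" "reachable_within E r b v"
    using assms(3) by blast
  then have "reachable_within E (r + 1 + r) u v"
    using centres reachable_within_sym reachable_within_trans by meson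
  then show "gdist E u v \<le> 2 * r + 1" using gdist_le_if_reachable_within by fastforce
qed

lemma sdeg_insert_edge:
  assumes "finite E" "e \<notin> E"
  shows "sdeg (insert e E) (s(e := b)) u = sdeg E s u + (if u \<in> e then (if b then 1 else -1) else 0)"
proof -
  have pos: "{e' \<in> insert e E. u \<in> e' \<and> (s(e := b)) e'}
      = (if u \<in> e \<and> b then insert e {e' \<in> E. u \<in> e' \<and> s e'} else {e' \<in> E. u \<in> e' \<and> s e'})"
    and neg: "{e' \<in> insert e E. u \<in> e' \<and> \<not> (s(e := b)) e'}
      = (if u \<in> e \<and> \<not> b then insert e {e' \<in> E. u \<in> e' \<and> \<not> s e'} else {e' \<in> E. u \<in> e' \<and> \<not> s e'})"
    using assms(2) by auto
  show ?thesis unfolding sdeg_def pos neg using assms by (cases "u \<in> e"; cases b) auto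
qed

lemma sdeg_isolated: "\<forall>e\<in>E. u \<notin> e \<Longrightarrow> sdeg E s u = 0"
  unfolding sdeg_def by (simp cong: conj_cong)

section \<open>The lower bound\<close>

definition two_arms :: "nat set set \<Rightarrow> nat \<Rightarrow> bool" where
  "two_arms E v \<longleftrightarrow> (\<exists>a1 a2 b1 b2. a1 \<noteq> a2 \<and> {v, a1} \<in> E \<and> {v, a2} \<in> E
     \<and> {a1, b1} \<in> E \<and> {a2, b2} \<in> E \<and> b1 \<noteq> v \<and> b2 \<noteq> v)"

lemma negative_edge_not_pendant:
  assumes t: "tree V E" and no_minus1: "-1 \<notin> sdeg E s ` V" and e: "{v, a} \<in> E" "\<not> s {v, a}"
  shows "\<exists>b. b \<noteq> v \<and> {a, b} \<in> E"
proof (rule ccontr)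
  assume pendant: "\<nexists>b. b \<noteq> v \<and> {a, b} \<in> E"
  have only: "e' = {v, a}" if e': "e' \<in> E" "a \<in> e'" for e'
  proof -
    obtain b where "e' = {a, b}" using tree_edge_at[OF t e'] by blast
    then show ?thesis using pendant e'(1) by (cases "b = v") (auto simp: insert_commute)
  qed
  have pos: "{e' \<in> E. a \<in> e' \<and> s e'} = {}" and neg: "{e' \<in> E. a \<in> e' \<and> \<not> s e'} = {{v, a}}"
    using only e by blast+
  have "sdeg E s a = -1" unfolding sdeg_def pos neg by simp
  moreover have "a \<in> V" using tree_edgeD[OF t e(1)] by blast
  ultimately show False using no_minus1 by (metis image_eqI)
qed

lemma two_arms_if_sdeg_le:
  assumes t: "tree V E" and no_minus1: "-1 \<notin> sdeg E s ` V" and "sdeg E s v \<le> -2"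
  shows "two_arms E v"
proof -
  let ?N = "{e \<in> E. v \<in> e \<and> \<not> s e}"
  have "finite ?N" using tree_finite[OF t] by simp
  moreover have "\<not> card ?N \<le> Suc 0" using assms(3) unfolding sdeg_def by linarith
  ultimately obtain e1 e2 where e12: "e1 \<in> ?N" "e2 \<in> ?N" "e1 \<noteq> e2"
    using card_le_Suc0_iff_eq by blast
  obtain a1 a2 where a: "e1 = {v, a1}" "e2 = {v, a2}"
    using tree_edge_at[OF t, of e1 v] tree_edge_at[OF t, of e2 v] e12 by blast
  have "a1 \<noteq> a2" using e12 a by auto
  moreover obtain b1 b2 where "b1 \<noteq> v" "{a1, b1} \<in> E" "b2 \<noteq> v" "{a2, b2} \<in> E"
    using negative_edge_not_pendant[OF t no_minus1, of v a1] negative_edge_not_pendant[OF t no_minus1, of v a2]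
      e12 a by blast
  ultimately show ?thesis unfolding two_arms_def using e12 a by blast
qed

lemma path_extend_at_hd:
  assumes t: "tree V E" and arms: "two_arms E (hd Q)" and Q: "distinct Q" "walk E Q"
  obtains a b where "distinct (b # a # Q)" "walk E (b # a # Q)"
proof -
  have acyc: "acyclic_graph E" using t by (simp add: tree_def)
  have off_path: "a \<notin> set Q" if "{hd Q, a} \<in> E" "a \<noteq> Q ! 1" for a
    using acyclic_path_neighbour_of_hd[OF acyc Q _ _ that(1)] tree_edgeD[OF t that(1)] that(2) by blast
  obtain a b where a: "{hd Q, a} \<in> E" "a \<notin> set Q" and b: "{a, b} \<in> E" "b \<noteq> hd Q"
    using arms off_path unfolding two_arms_def by metis
  have aQ: "distinct (a # Q)" "walk E (a # Q)"
    using a Q by (cases Q; simp add: insert_commute)+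
  have "b \<notin> set Q"
  proof
    assume "b \<in> set Q"
    moreover have "b \<noteq> a" using tree_edgeD[OF t b(1)] by blast
    ultimately have "b = (a # Q) ! 1"
      using acyclic_path_neighbour_of_hd[OF acyc aQ, of b] b(1) by simp
    then show False using b(2) Q(2) by (cases Q) auto
  qed
  then show ?thesis using that[of b a] aQ b tree_edgeD[OF t b(1)] by (simp add: insert_commute)
qed

lemma tree_diam_ge_path_two_arms:
  assumes t: "tree V E" and P: "distinct P" "walk E P"
    and arms: "two_arms E (hd P)" "two_arms E (last P)"
  shows "length P + 3 \<le> tree_diam V E"
proof -
  obtain a b where Q: "distinct (b # a # P)" "walk E (b # a # P)"
    using path_extend_at_hd[OF t arms(1) P] .
  let ?R = "rev (b # a # P)"
  have R: "distinct ?R" "walk E ?R" using Q walk_rev by (simp, blast)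
  have "hd ?R = last P" unfolding hd_rev using P(2) by auto
  obtain a' b' where S: "distinct (b' # a' # ?R)" "walk E (b' # a' # ?R)"
    using path_extend_at_hd[OF t _ R] arms(2) \<open>hd ?R = last P\<close> by metis
  have "gdist E b' b = length P + 3"
    using gdist_path[OF _ S] t by (simp add: tree_def last_rev)
  moreover have "b' \<in> V" "b \<in> V" using S Q tree_edgeD[OF t] by (auto simp: insert_commute)
  ultimately show ?thesis using gdist_le_tree_diam[OF t] by metis
qed

lemma tree_diam_ge_two_arms:
  assumes t: "tree V E" and uw: "u \<in> V" "w \<in> V" and arms: "two_arms E u" "two_arms E w"
  shows "4 \<le> tree_diam V E" and "u \<noteq> w \<Longrightarrow> 5 \<le> tree_diam V E"
    and "u \<noteq> w \<Longrightarrow> {u, w} \<notin> E \<Longrightarrow> 6 \<le> tree_diam V E"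
proof -
  obtain P where P: "distinct P" "walk E P" "hd P = u" "last P = w" using tree_path[OF t uw] .
  then have diam: "length P + 3 \<le> tree_diam V E" using tree_diam_ge_path_two_arms[OF t] arms by simp
  then show "4 \<le> tree_diam V E" using P(2) by (cases P) auto
  show "5 \<le> tree_diam V E" if "u \<noteq> w"
  proof -
    have "2 \<le> length P" using P that by (cases P) (auto simp: Suc_le_eq split: if_splits)
    then show ?thesis using diam by simp
  qed
  show "6 \<le> tree_diam V E" if "u \<noteq> w" "{u, w} \<notin> E"
    using diam walk_length_ge_3[OF P(2)] P that by simp
qed

lemma tree_no_triangle:
  "tree V E \<Longrightarrow> distinct [u, v, w] \<Longrightarrow> {u, v} \<in> E \<Longrightarrow> {v, w} \<in> E \<Longrightarrow> {w, u} \<notin> E"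
  using acyclic_graphD[of E "[u, v, w]"] by (simp add: tree_def)

lemma tree_diam_lower_bound:
  assumes t: "tree V E" and no_minus1: "-1 \<notin> sdeg E s ` V"
    and Y: "Y \<subseteq> sdeg E s ` V" "Y \<noteq> {}" "\<forall>y\<in>Y. y < -1"
  shows "min 6 (card Y + 3) \<le> tree_diam V E"
proof -
  have "finite Y" using Y(1) tree_finite[OF t] finite_surj by blast
  then have "1 \<le> card Y" using Y(2) by (simp add: Suc_leI card_gt_0_iff)
  have vertex: "\<exists>v\<in>V. sdeg E s v = y \<and> two_arms E v" if "y \<in> Y" for y
    using that Y two_arms_if_sdeg_le[OF t no_minus1] by fastforce
  obtain y where "y \<in> Y" using Y(2) by blast
  then have "4 \<le> tree_diam V E" using vertex tree_diam_ge_two_arms(1)[OF t] by blast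
  moreover have "5 \<le> tree_diam V E" if "2 \<le> card Y"
  proof -
    have "\<not> card Y \<le> Suc 0" using that by simp
    then obtain y1 y2 where "y1 \<in> Y" "y2 \<in> Y" "y1 \<noteq> y2"
      using card_le_Suc0_iff_eq[OF \<open>finite Y\<close>] by blast
    then show ?thesis using vertex tree_diam_ge_two_arms(2)[OF t] by metis
  qed
  moreover have "6 \<le> tree_diam V E" if three: "3 \<le> card Y"
  proof -
    obtain T where "T \<subseteq> Y" "card T = 3" using obtain_subset_with_card_n[OF three] by blast
    then obtain y1 y2 y3 where y: "y1 \<in> Y" "y2 \<in> Y" "y3 \<in> Y" "y1 \<noteq> y2" "y2 \<noteq> y3" "y1 \<noteq> y3"
      by (auto simp: card_3_iff)
    then obtain v1 v2 v3 where v: "v1 \<in> V" "v2 \<in> V" "v3 \<in> V"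
      "two_arms E v1" "two_arms E v2" "two_arms E v3" "distinct [v1, v2, v3]"
      using vertex by (metis distinct_length_2_or_more distinct_singleton)
    then have "{v1, v2} \<notin> E \<or> {v2, v3} \<notin> E \<or> {v3, v1} \<notin> E" using tree_no_triangle[OF t] by blast
    then show ?thesis using v tree_diam_ge_two_arms(3)[OF t] by auto
  qed
  ultimately show ?thesis using \<open>1 \<le> card Y\<close> by linarith
qed

section \<open>Gadgets\<close>

(* (V', E', s') arises from (V, E, s) by hanging a gadget from v. Attachability quantifies over
   all host trees, so that gadgets can be combined freely. *)
definition extends_at ::
  "nat set \<Rightarrow> nat set set \<Rightarrow> (nat set \<Rightarrow> bool) \<Rightarrow> nat set \<Rightarrow> nat set set \<Rightarrow> (nat set \<Rightarrow> bool)
    \<Rightarrow> nat \<Rightarrow> int \<Rightarrow> int set \<Rightarrow> nat \<Rightarrow> bool" where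
  "extends_at V E s V' E' s' v \<delta> S k \<longleftrightarrow> tree V' E' \<and> V \<subseteq> V' \<and> E \<subseteq> E'
     \<and> (\<forall>u\<in>V - {v}. sdeg E' s' u = sdeg E s u) \<and> sdeg E' s' v = sdeg E s v + \<delta>
     \<and> sdeg E' s' ` (V' - V) = S \<and> (\<forall>u\<in>V' - V. reachable_within E' k v u)"

definition attachable :: "int \<Rightarrow> int set \<Rightarrow> nat \<Rightarrow> bool" where
  "attachable \<delta> S k \<longleftrightarrow>
     (\<forall>V E s v. tree V E \<longrightarrow> v \<in> V \<longrightarrow> (\<exists>V' E' s'. extends_at V E s V' E' s' v \<delta> S k))"

lemma attachableD:
  assumes "attachable \<delta> S k" "tree V E" "v \<in> V"
  obtains V' E' s' where "extends_at V E s V' E' s' v \<delta> S k"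
  using assms unfolding attachable_def by blast

lemma attachable_empty: "attachable 0 {} k"
  unfolding attachable_def extends_at_def by auto

lemma extends_at_trans:
  assumes v: "v \<in> V" and e1: "extends_at V E s V1 E1 s1 v \<delta>1 S1 k"
    and e2: "extends_at V1 E1 s1 V2 E2 s2 v \<delta>2 S2 k"
  shows "extends_at V E s V2 E2 s2 v (\<delta>1 + \<delta>2) (S1 \<union> S2) k"
proof -
  from e1 have V1: "V \<subseteq> V1" "E \<subseteq> E1" "\<forall>u\<in>V - {v}. sdeg E1 s1 u = sdeg E s u"
    "sdeg E1 s1 v = sdeg E s v + \<delta>1" "sdeg E1 s1 ` (V1 - V) = S1" "\<forall>u\<in>V1 - V. reachable_within E1 k v u"
    unfolding extends_at_def by blast+
  from e2 have V2: "tree V2 E2" "V1 \<subseteq> V2" "E1 \<subseteq> E2" "\<forall>u\<in>V1 - {v}. sdeg E2 s2 u = sdeg E1 s1 u"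
    "sdeg E2 s2 v = sdeg E1 s1 v + \<delta>2" "sdeg E2 s2 ` (V2 - V1) = S2" "\<forall>u\<in>V2 - V1. reachable_within E2 k v u"
    unfolding extends_at_def by blast+
  have "sdeg E2 s2 ` (V1 - V) = S1" using V1(5) V2(4) v by (auto intro!: image_cong)
  moreover have "V2 - V = (V1 - V) \<union> (V2 - V1)" using V1(1) V2(2) by blast
  ultimately have "sdeg E2 s2 ` (V2 - V) = S1 \<union> S2" using V2(6) by (simp add: image_Un)
  moreover have "\<forall>u\<in>V2 - V. reachable_within E2 k v u"
    using V1(6) V2(3,7) reachable_within_mono by blast
  moreover have "\<forall>u\<in>V - {v}. sdeg E2 s2 u = sdeg E s u"
  proof
    fix u assume "u \<in> V - {v}"
    then have "u \<in> V1 - {v}" using V1(1) by blast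
    then show "sdeg E2 s2 u = sdeg E s u" using V1(3) V2(4) \<open>u \<in> V - {v}\<close> by simp
  qed
  ultimately show ?thesis using V1 V2 unfolding extends_at_def by auto
qed

lemma attachable_Un: "attachable \<delta>1 S1 k \<Longrightarrow> attachable \<delta>2 S2 k \<Longrightarrow> attachable (\<delta>1 + \<delta>2) (S1 \<union> S2) k"
  unfolding attachable_def by (meson extends_at_trans extends_at_def subsetD)

lemma extends_at_mono:
  "extends_at V E s V' E' s' v \<delta> S k \<Longrightarrow> k \<le> k' \<Longrightarrow> extends_at V E s V' E' s' v \<delta> S k'"
  unfolding extends_at_def using reachable_within_mono[OF _ order_refl] by blast

lemma attachable_mono: "attachable \<delta> S k \<Longrightarrow> k \<le> k' \<Longrightarrow> attachable \<delta> S k'"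
  unfolding attachable_def using extends_at_mono by meson

lemma attachable_sum:
  "finite A \<Longrightarrow> (\<And>a. a \<in> A \<Longrightarrow> attachable (\<delta> a) (S a) k)
    \<Longrightarrow> attachable (\<Sum>a\<in>A. \<delta> a) (\<Union>a\<in>A. S a) k"
  by (induction A rule: finite_induct) (simp_all add: attachable_empty attachable_Un)

lemma extends_at_add_leaf:
  assumes t: "tree V E" and v: "v \<in> V" and w: "w \<notin> V"
  shows "extends_at V E s (insert w V) (insert {v, w} E) (s({v, w} := b)) v
           (if b then 1 else -1) {if b then 1 else -1} 1"
proof -
  let ?E = "insert {v, w} E" and ?s = "s({v, w} := b)"
  have new: "{v, w} \<notin> E" using tree_finite(3)[OF t] w by blast
  have sd: "sdeg ?E ?s u = sdeg E s u + (if u \<in> {v, w} then (if b then 1 else -1) else 0)" for u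
    using sdeg_insert_edge[OF tree_finite(2)[OF t] new] .
  have "sdeg E s w = 0" using tree_finite(3)[OF t] w by (intro sdeg_isolated) blast
  moreover have "insert w V - V = {w}" using w by blast
  ultimately have "sdeg ?E ?s ` (insert w V - V) = {if b then 1 else -1}" using sd[of w] by simp
  moreover have "\<forall>u\<in>V - {v}. sdeg ?E ?s u = sdeg E s u" using w sd by auto
  moreover have "reachable_within ?E 1 v w" by (rule reachable_within_edge) simp
  ultimately show ?thesis
    unfolding extends_at_def using tree_add_leaf[OF t v w] sd[of v] w by auto
qed

lemma extends_at_nest:
  assumes v: "v \<in> V" and w: "w \<notin> V"
    and e1: "extends_at V E s (insert w V) E1 s1 v \<delta>1 {\<sigma>} 1"
    and e2: "extends_at (insert w V) E1 s1 V2 E2 s2 w \<delta>2 S2 k"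
  shows "extends_at V E s V2 E2 s2 v \<delta>1 (insert (\<sigma> + \<delta>2) S2) (Suc k)"
proof -
  from e1 have V1: "E \<subseteq> E1" "\<forall>u\<in>V - {v}. sdeg E1 s1 u = sdeg E s u"
    "sdeg E1 s1 v = sdeg E s v + \<delta>1" "sdeg E1 s1 w = \<sigma>" "reachable_within E1 1 v w"
    using w unfolding extends_at_def by (auto simp: insert_Diff_if)
  from e2 have V2: "tree V2 E2" "insert w V \<subseteq> V2" "E1 \<subseteq> E2"
    "\<forall>u\<in>insert w V - {w}. sdeg E2 s2 u = sdeg E1 s1 u" "sdeg E2 s2 w = sdeg E1 s1 w + \<delta>2"
    "sdeg E2 s2 ` (V2 - insert w V) = S2" "\<forall>u\<in>V2 - insert w V. reachable_within E2 k w u"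
    unfolding extends_at_def by blast+
  have old: "\<forall>u\<in>V - {v}. sdeg E2 s2 u = sdeg E s u" "sdeg E2 s2 v = sdeg E s v + \<delta>1"
    using V1(2,3) V2(4) v w by auto
  have "V2 - V = insert w (V2 - insert w V)" using V2(2) w by blast
  then have new: "sdeg E2 s2 ` (V2 - V) = insert (\<sigma> + \<delta>2) S2" using V1(4) V2(5,6) by simp
  have vw: "reachable_within E2 1 v w" using V1(5) V2(3) reachable_within_mono by blast
  have "\<forall>u\<in>V2 - V. reachable_within E2 (Suc k) v u"
  proof
    fix u assume "u \<in> V2 - V"
    then consider "u = w" | "u \<in> V2 - insert w V" by blast
    then show "reachable_within E2 (Suc k) v u"
    proof cases
      case 1
      then show ?thesis using reachable_within_mono[OF vw] by simp
    next
      case 2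
      then show ?thesis using reachable_within_trans[OF vw] V2(7) by simp
    qed
  qed
  then show ?thesis using V1(1) V2(1-3) old new unfolding extends_at_def by blast
qed

lemma attachable_pendant:
  assumes "attachable \<delta> S k"
  shows "attachable (if b then 1 else -1) (insert ((if b then 1 else -1) + \<delta>) S) (Suc k)"
  unfolding attachable_def
proof (intro allI impI)
  fix V E s v assume t: "tree V E" and v: "v \<in> V"
  obtain w :: nat where w: "w \<notin> V"
    using ex_new_if_finite[OF infinite_UNIV_nat tree_finite(1)[OF t]] by blast
  note e1 = extends_at_add_leaf[OF t v w, of s b]
  have "tree (insert w V) (insert {v, w} E)" using tree_add_leaf[OF t v w] .
  then obtain V2 E2 s2 where "extends_at (insert w V) (insert {v, w} E) (s({v, w} := b)) V2 E2 s2 w \<delta> S k"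
    using attachableD[OF assms] by blast
  then show "\<exists>V' E' s'. extends_at V E s V' E' s' v
      (if b then 1 else -1) (insert ((if b then 1 else -1) + \<delta>) S) (Suc k)"
    using extends_at_nest[OF v w e1] by blast
qed

lemma attachable_leaves: "attachable (int j) (if j = 0 then {} else {1}) 1"
proof -
  have "attachable (\<Sum>a<j. 1) (\<Union>a<j. {1}) 1"
    by (rule attachable_sum) (use attachable_pendant[OF attachable_empty, of True] in auto)
  moreover have "(\<Union>a<j. {1::int}) = (if j = 0 then {} else {1})" by auto
  ultimately show ?thesis by simp
qed

(* An edge of sign b to a new vertex carrying j positive leaves. *)
lemma attachable_star:
  "attachable (if b then 1 else -1) (insert ((if b then 1 else -1) + int j) (if j = 0 then {} else {1})) 2"
  using attachable_pendant[OF attachable_leaves, of b j] by (simp add: numeral_2_eq_2)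

lemma attachable_large_degree: "1 < x \<Longrightarrow> attachable 1 {x, 1} 2"
  using attachable_star[of True "nat (x - 1)"] by simp

lemma attachable_zero_degree: "attachable (-1) {0, 1} 2"
  using attachable_star[of False 1] by simp

lemma attachable_negative_pendant: "attachable (-1) {1} 2"
  using attachable_star[of False 2] by simp

lemma attachable_negative_pendants:
  assumes "2 \<le> k" "0 < j"
  shows "attachable (- int j) {1} k"
proof -
  have "attachable (\<Sum>a<j. -1) (\<Union>a<j. {1}) k"
    by (rule attachable_sum) (use attachable_mono[OF attachable_negative_pendant assms(1)] in auto)
  moreover have "(\<Union>a<j. {1::int}) = {1}" using assms(2) by auto
  ultimately show ?thesis by simp
qed

lemma attachable_lower:
  assumes "attachable \<delta> S k" "2 \<le> k" "t < \<delta>"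
  shows "attachable t (insert 1 S) k"
  using attachable_Un[OF assms(1) attachable_negative_pendants[OF assms(2), of "nat (\<delta> - t)"]] assms(3)
  by simp

lemma attachable_small_degree:
  assumes "y < -1"
  shows "attachable 1 {y, 1} 3"
proof -
  have "attachable (y - 1) {1} 2" using attachable_negative_pendants[of 2 "nat (1 - y)"] assms by simp
  then show ?thesis using attachable_pendant[of "y - 1" "{1}" 2 True] by (simp add: numeral_3_eq_3 insert_commute)
qed

section \<open>The upper bound\<close>

lemma attachable_realization_center:
  assumes "attachable \<delta> S k" "insert \<delta> S = D"
  obtains V E s where "tree V E" "sdeg E s ` V = D" "tree_diam V E \<le> 2 * k"
proof -
  obtain V E s where e: "extends_at {0} {} (\<lambda>_. True) V E s 0 \<delta> S k"
    using attachableD[OF assms(1) tree_singleton] by blast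
  then have t: "tree V E" and "0 \<in> V" and root: "sdeg E s 0 = \<delta>"
    and rest: "sdeg E s ` (V - {0}) = S" "\<forall>u\<in>V - {0}. reachable_within E k 0 u"
    unfolding extends_at_def by (auto simp: sdeg_isolated)
  then have "V = insert 0 (V - {0})" by blast
  then have "sdeg E s ` V = D" using root rest(1) assms(2) by (metis image_insert)
  moreover have "\<forall>u\<in>V. reachable_within E k 0 u" using rest(2) reachable_within_refl by blast
  ultimately show ?thesis using that t tree_diam_le_center[OF t] by blast
qed

lemma attachable_realization_bicenter:
  assumes "attachable \<delta>1 S1 k" "attachable \<delta>2 S2 k" "{\<delta>1 + 1, \<delta>2 + 1} \<union> S1 \<union> S2 = D"
  obtains V E s where "tree V E" "sdeg E s ` V = D" "tree_diam V E \<le> 2 * k + 1"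
proof -
  define s0 :: "nat set \<Rightarrow> bool" where "s0 = (\<lambda>_. True)({0, 1} := True)"
  have t0: "tree {1, 0} {{0, 1}}" using tree_add_leaf[of "{0}" "{}" 0 1] tree_singleton by simp
  have deg0: "sdeg {{0, 1}} s0 0 = 1" "sdeg {{0, 1}} s0 1 = 1"
    unfolding s0_def using sdeg_insert_edge[of "{}" "{0, 1}"] sdeg_isolated[of "{}"] by simp_all
  obtain V1 E1 s1 where e1: "extends_at {1, 0} {{0, 1}} s0 V1 E1 s1 0 \<delta>1 S1 k"
    using attachableD[OF assms(1) t0] by blast
  then have "tree V1 E1" "1 \<in> V1" unfolding extends_at_def by auto
  then obtain V2 E2 s2 where e2: "extends_at V1 E1 s1 V2 E2 s2 1 \<delta>2 S2 k"
    using attachableD[OF assms(2)] by blast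
  from e1 have V1: "{1, 0} \<subseteq> V1" "{{0, 1}} \<subseteq> E1" "sdeg E1 s1 1 = 1" "sdeg E1 s1 0 = 1 + \<delta>1"
    "sdeg E1 s1 ` (V1 - {1, 0}) = S1" "\<forall>u\<in>V1 - {1, 0}. reachable_within E1 k 0 u"
    using deg0 unfolding extends_at_def by auto
  from e2 have V2: "tree V2 E2" "V1 \<subseteq> V2" "E1 \<subseteq> E2" "\<forall>u\<in>V1 - {1}. sdeg E2 s2 u = sdeg E1 s1 u"
    "sdeg E2 s2 1 = sdeg E1 s1 1 + \<delta>2" "sdeg E2 s2 ` (V2 - V1) = S2"
    "\<forall>u\<in>V2 - V1. reachable_within E2 k 1 u"
    unfolding extends_at_def by blast+
  have "sdeg E2 s2 ` {0, 1} = {\<delta>1 + 1, \<delta>2 + 1}" using V1(1,3,4) V2(4,5) by auto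
  moreover have "sdeg E2 s2 ` (V1 - {1, 0}) = S1" using V1(5) V2(4) by (auto intro!: image_cong)
  moreover have "V2 = {0, 1} \<union> (V1 - {1, 0}) \<union> (V2 - V1)" using V1(1) V2(2) by blast
  ultimately have "sdeg E2 s2 ` V2 = D"
    using V2(6) assms(3) by (metis image_Un)
  moreover have "\<forall>u\<in>V2. reachable_within E2 k 0 u \<or> reachable_within E2 k 1 u"
    using V1(6) V2(3,7) reachable_within_refl reachable_within_mono[OF _ _ order_refl] by blast
  moreover have "{0, 1} \<in> E2" using V1(2) V2(3) by blast
  ultimately show ?thesis using that V2(1) tree_diam_le_bicenter[OF V2(1)] by blast
qed

lemma attachable_large_degrees:
  "finite X \<Longrightarrow> \<forall>x\<in>X. 1 < x \<Longrightarrow> attachable (int (card X)) (\<Union>x\<in>X. {x, 1}) 2"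
  using attachable_sum[of X "\<lambda>_. 1" "\<lambda>x. {x, 1}" 2] attachable_large_degree by simp

lemma attachable_zero_degrees:
  "Z \<subseteq> {0} \<Longrightarrow> attachable (- int (card Z)) (\<Union>z\<in>Z. {0, 1}) 2"
  using attachable_sum[of Z "\<lambda>_. -1" "\<lambda>_. {0, 1}" 2] attachable_zero_degree finite_subset by fastforce

lemma attachable_small_degrees:
  "finite Y \<Longrightarrow> \<forall>y\<in>Y. y < -1 \<Longrightarrow> attachable (int (card Y)) (\<Union>y\<in>Y. {y, 1}) 3"
  using attachable_sum[of Y "\<lambda>_. 1" "\<lambda>y. {y, 1}" 3] attachable_small_degree by simp

lemma card_le_1_if_subset_singleton: "Z \<subseteq> {a} \<Longrightarrow> card Z \<le> 1"
  using card_mono[of "{a}" Z] by simp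

lemma realization_one_small_degree:
  assumes X: "finite X" "\<forall>x\<in>X. 1 < x" and Z: "Z \<subseteq> {0}" and y: "y < -1"
  obtains V E s where "tree V E" "sdeg E s ` V = {1, y} \<union> X \<union> Z" "tree_diam V E \<le> 4"
proof -
  let ?S = "(\<Union>x\<in>X. {x, 1}) \<union> (\<Union>z\<in>Z. {0, 1})"
  have "attachable (int (card X) - int (card Z)) ?S 2"
    using attachable_Un[OF attachable_large_degrees[OF X] attachable_zero_degrees[OF Z]] by simp
  then have A: "attachable y (insert 1 ?S) 2"
    using attachable_lower y card_le_1_if_subset_singleton[OF Z] by simp
  have degrees: "insert y (insert 1 ?S) = {1, y} \<union> X \<union> Z" using Z by blast
  obtain V E s where "tree V E" "sdeg E s ` V = {1, y} \<union> X \<union> Z" "tree_diam V E \<le> 2 * 2"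
    by (rule attachable_realization_center[OF A degrees])
  then show ?thesis using that by simp
qed

lemma realization_two_small_degrees:
  assumes X: "finite X" "\<forall>x\<in>X. 1 < x" and Z: "Z \<subseteq> {0}" and y: "y1 < -1" "y2 < -1"
  obtains V E s where "tree V E" "sdeg E s ` V = {1, y1, y2} \<union> X \<union> Z" "tree_diam V E \<le> 5"
proof -
  have A1: "attachable (y1 - 1) (insert 1 (\<Union>x\<in>X. {x, 1})) 2"
    using attachable_lower[OF attachable_large_degrees[OF X]] y(1) by simp
  have A2: "attachable (y2 - 1) (insert 1 (\<Union>z\<in>Z. {0, 1})) 2"
    using attachable_lower[OF attachable_zero_degrees[OF Z]] y(2) card_le_1_if_subset_singleton[OF Z]
    by simp
  have degrees: "{y1 - 1 + 1, y2 - 1 + 1} \<union> insert 1 (\<Union>x\<in>X. {x, 1}) \<union> insert 1 (\<Union>z\<in>Z. {0, 1})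
      = {1, y1, y2} \<union> X \<union> Z"
    using Z by auto
  obtain V E s where "tree V E" "sdeg E s ` V = {1, y1, y2} \<union> X \<union> Z" "tree_diam V E \<le> 2 * 2 + 1"
    by (rule attachable_realization_bicenter[OF A1 A2 degrees])
  then show ?thesis using that by simp
qed

lemma realization_many_small_degrees:
  assumes X: "finite X" "\<forall>x\<in>X. 1 < x" and Z: "Z \<subseteq> {0}"
    and Y: "finite Y" "3 \<le> card Y" "\<forall>y\<in>Y. y < -1"
  obtains V E s where "tree V E" "sdeg E s ` V = {1} \<union> Y \<union> X \<union> Z" "tree_diam V E \<le> 6"
proof -
  let ?S = "(\<Union>y\<in>Y. {y, 1}) \<union> ((\<Union>x\<in>X. {x, 1}) \<union> (\<Union>z\<in>Z. {0, 1}))"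
  have "attachable (int (card X) - int (card Z)) ((\<Union>x\<in>X. {x, 1}) \<union> (\<Union>z\<in>Z. {0, 1})) 3"
    using attachable_mono[OF attachable_Un[OF attachable_large_degrees[OF X] attachable_zero_degrees[OF Z]]]
    by simp
  then have "attachable (int (card Y) + (int (card X) - int (card Z))) ?S 3"
    using attachable_Un[OF attachable_small_degrees[OF Y(1,3)]] by blast
  then have A: "attachable 1 (insert 1 ?S) 3"
    using attachable_lower Y(2) card_le_1_if_subset_singleton[OF Z] by simp
  have degrees: "insert 1 (insert 1 ?S) = {1} \<union> Y \<union> X \<union> Z" using Z by blast
  obtain V E s where "tree V E" "sdeg E s ` V = {1} \<union> Y \<union> X \<union> Z" "tree_diam V E \<le> 2 * 3"
    by (rule attachable_realization_center[OF A degrees])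
  then show ?thesis using that by simp
qed

lemma signed_tree_diam_upper_bound:
  assumes X: "finite X" "\<forall>x\<in>X. 1 < x" and Y: "finite Y" "Y \<noteq> {}" "\<forall>y\<in>Y. y < -1"
    and Z: "Z \<subseteq> {0}"
  obtains V E s where "tree V E" "sdeg E s ` V = {1} \<union> Y \<union> X \<union> Z"
    "tree_diam V E \<le> min 6 (card Y + 3)"
proof -
  have "card Y \<noteq> 0" using Y(1,2) by simp
  then consider (one) "card Y = 1" | (two) "card Y = 2" | (many) "3 \<le> card Y" by linarith
  then show ?thesis
  proof cases
    case one
    then obtain y where y: "Y = {y}" by (auto simp: card_1_singleton_iff)
    then have "y < -1" using Y(3) by simp
    then obtain V E s where "tree V E" "sdeg E s ` V = {1, y} \<union> X \<union> Z" "tree_diam V E \<le> 4"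
      by (rule realization_one_small_degree[OF X Z])
    then show ?thesis using that one y by (simp add: insert_commute)
  next
    case two
    then obtain y1 y2 where y: "Y = {y1, y2}" by (auto simp: card_2_iff)
    then have "y1 < -1" "y2 < -1" using Y(3) by simp_all
    then obtain V E s where "tree V E" "sdeg E s ` V = {1, y1, y2} \<union> X \<union> Z" "tree_diam V E \<le> 5"
      by (rule realization_two_small_degrees[OF X Z])
    then show ?thesis using that two y by (simp add: insert_commute)
  next
    case many
    then obtain V E s where "tree V E" "sdeg E s ` V = {1} \<union> Y \<union> X \<union> Z" "tree_diam V E \<le> 6"
      using realization_many_small_degrees[OF X Z Y(1) _ Y(3)] by blast
    then show ?thesis using that many by simp
  qed
qed

lemma diamD_eqI:
  assumes "\<exists>V E s. tree V E \<and> realizes V E s D \<and> tree_diam V E \<le> d"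
    and "\<And>V E s. tree V E \<Longrightarrow> realizes V E s D \<Longrightarrow> d \<le> tree_diam V E"
  shows "diamD D = d"
  unfolding diamD_def
proof (rule Least_equality)
  show "\<exists>V E s. tree V E \<and> realizes V E s D \<and> tree_diam V E = d"
    using assms by (meson le_antisym)
next
  fix d' assume "\<exists>V E s. tree V E \<and> realizes V E s D \<and> tree_diam V E = d'"
  then show "d \<le> d'" using assms(2) by blast
qed

lemma diamD_degree_set:
  assumes X: "finite X" "\<forall>x\<in>X. 1 < x" and Y: "finite Y" "Y \<noteq> {}" "\<forall>y\<in>Y. y < -1"
    and Z: "Z \<subseteq> {0}"
  shows "diamD ({1} \<union> Y \<union> X \<union> Z) = min 6 (card Y + 3)"
proof (rule diamD_eqI)
  show "\<exists>V E s. tree V E \<and> realizes V E s ({1} \<union> Y \<union> X \<union> Z)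
      \<and> tree_diam V E \<le> min 6 (card Y + 3)"
    using signed_tree_diam_upper_bound[OF assms] unfolding realizes_def by metis
next
  fix V E s assume "tree V E" "realizes V E s ({1} \<union> Y \<union> X \<union> Z)"
  moreover have "-1 \<notin> {1} \<union> Y \<union> X \<union> Z" using X(2) Y(3) Z by force
  ultimately show "min 6 (card Y + 3) \<le> tree_diam V E"
    using tree_diam_lower_bound[of V E s Y] Y unfolding realizes_def by auto
qed

theorem mainTheorem6:
  fixes Y X :: "int set" and m n :: nat
  assumes "m \<ge> 1"
    and "finite Y" and "card Y = m" and "\<forall>y\<in>Y. y < -1"
    and "finite X" and "card X = n" and "\<forall>x\<in>X. x > 1"
    and "D = {1} \<union> Y \<union> X"
  shows "diamD D = diamD (insert 0 D)
         \<and> (m = 1 \<longrightarrow> diamD D = 4)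
         \<and> (m = 2 \<longrightarrow> diamD D = 5)
         \<and> (m > 2 \<longrightarrow> diamD D = 6)"
proof -
  have "Y \<noteq> {}" using assms(1,3) by auto
  then have "diamD ({1} \<union> Y \<union> X \<union> Z) = min 6 (m + 3)" if "Z \<subseteq> {0}" for Z
    using diamD_degree_set[OF assms(5,7,2) _ assms(4) that] assms(3) by simp
  from this[of "{}"] this[of "{0}"] have "diamD D = min 6 (m + 3)" "diamD (insert 0 D) = min 6 (m + 3)"
    using assms(8) by (simp_all add: insert_commute)
  then show ?thesis by auto
qed

end
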